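(* Suppose $f$ is $L_f$-smooth, $\mathbf{c}$ is $L_c$-smooth, and there exist $C,G>0$ such that for all $\mathbf{x}$: $\|\nabla f(\mathbf{x})\|\le G$, $\sup_{\mathbf{v}_h\in\partial h(\mathbf{x})}\|\mathbf{v}_h\|\le G$, $\sup_{\mathbf{v}_g\in\partial g(\mathbf{x})}\|\mathbf{v}_g\|\le G$, $\|\nabla\mathbf{c}(\mathbf{x})\|\le G$, $\|\mathbf{c}(\mathbf{x})\|\le C$; and the parameters satisfy $\mu_kL_{\rho_k}\le\frac14$, $\mu_{k+1}\le\mu_k$, $\rho_k\le\rho_{k+1}$, $0<\beta\le1$ for all $k\ge0$. Let $\underline\rho_K:=\min_{0\le k\le K-1}\rho_k$. Then for any $K\ge1$, $\frac1K\sum_{k=0}^{K-1}\|\nabla\mathbf{c}(\mathbf{x}^{k+1})\mathbf{c}(\mathbf{x}^{k+1})\|^2\le\frac{2}{\underline\rho_K^2K}\sum_{k=0}^{K-1}\|\mathbf{u}^{k+1}\|^2+\frac{18G^2}{\underline\rho_K^2}$. Moreover, if there exists $\delta>0$ such that $\|\nabla\mathbf{c}(\mathbf{x}^k)\mathbf{c}(\mathbf{x}^k)\|\ge\delta\|\mathbf{c}(\mathbf{x}^k)\|$ for all iterates $k\ge0$, then $\frac1K\sum_{k=0}^{K-1}\|\mathbf{c}(\mathbf{x}^{k+1})\|^2\le\frac{2}{\underline\rho_K^2\delta^2K}\sum_{k=0}^{K-1}\|\mathbf{u}^{k+1}\|^2+\frac{18G^2}{\delta^2\underline\rho_K^2}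$.
   Context: Problem: $\min f(\mathbf{x})+h(\mathbf{x})-g(\mathbf{x})$ s.t. $\mathbf{c}(\mathbf{x})=\mathbf{0}$, $f=\mathbb{E}_\xi[\mathbf{f}(\cdot,\xi)]$, $h,g$ proper closed convex; $\nabla\mathbf{c}(\mathbf{x})$ the transposed Jacobian. $Q_\rho(\mathbf{x})=f(\mathbf{x})+\frac{\rho}{2}\|\mathbf{c}(\mathbf{x})\|^2$, $L_\rho=\rho(\rho_0^{-1}L_f+G^2+CL_c)$. Iterates $(\mathbf{x}^k,\mathbf{z}^k)$ of MoSSP-P or MoSSP-R: $\mathbf{x}^{k+1}=\mathrm{prox}_{\mu_kh}(\mathbf{z}^k-\mu_k\mathbf{G}^k)$, $\mathbf{z}^{k+1}=\mathbf{z}^k-\beta(\mathrm{prox}_{\mu_kg}(\mathbf{z}^k)-\mathbf{x}^{k+1})$, with $\mathbf{G}^k$ the momentum estimator ($\mathbf{S}^k$ or $\mathbf{D}^k$) of $\nabla Q_{\rho_k}(\mathbf{x}^k)$; $\mathbf{u}^{k+1}:=\nabla Q_{\rho_k}(\mathbf{x}^{k+1})-\mathbf{G}^k+\mu_k^{-1}(\mathrm{prox}_{\mu_kg}(\mathbf{z}^k)-\mathbf{x}^{k+1})\in\nabla Q_{\rho_k}(\mathbf{x}^{k+1})+\partial h(\mathbf{x}^{k+1})-\partial g(\mathrm{prox}_{\mu_kg}(\mathbf{z}^k))$. *)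

theory Defs
  imports "HOL-Analysis.Analysis"
begin

definition jacT :: "('a::euclidean_space \<Rightarrow> 'b::euclidean_space) \<Rightarrow> 'a \<Rightarrow> 'b \<Rightarrow> 'a" where
  "jacT c x = adjoint (frechet_derivative c (at x))"

definition grad :: "('a::euclidean_space \<Rightarrow> real) \<Rightarrow> 'a \<Rightarrow> 'a" where
  "grad f x = jacT f x 1"

definition smooth_fun :: "real \<Rightarrow> ('a::euclidean_space \<Rightarrow> real) \<Rightarrow> bool" where
  "smooth_fun L f \<longleftrightarrow> (\<forall>x. f differentiable (at x)) \<and>
     (\<forall>x y. norm (grad f x - grad f y) \<le> L * norm (x - y))"

definition smooth_map :: "real \<Rightarrow> ('a::euclidean_space \<Rightarrow> 'b::euclidean_space) \<Rightarrow> bool" where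
  "smooth_map L c \<longleftrightarrow> (\<forall>x. c differentiable (at x)) \<and>
     (\<forall>x y. onorm (\<lambda>v. jacT c x v - jacT c y v) \<le> L * norm (x - y))"

definition subdiff :: "('a::real_inner \<Rightarrow> real) \<Rightarrow> 'a \<Rightarrow> 'a set" where
  "subdiff h x = {v. \<forall>y. h y \<ge> h x + inner v (y - x)}"

definition prox :: "real \<Rightarrow> ('a::real_normed_vector \<Rightarrow> real) \<Rightarrow> 'a \<Rightarrow> 'a" where
  "prox mu h z = (SOME x. \<forall>y. h x + norm (x - z)^2 / (2 * mu) \<le> h y + norm (y - z)^2 / (2 * mu))"

definition Qpen :: "('a \<Rightarrow> real) \<Rightarrow> ('a \<Rightarrow> 'b::real_normed_vector) \<Rightarrow> real \<Rightarrow> 'a \<Rightarrow> real" where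
  "Qpen f c rho x = f x + rho / 2 * (norm (c x))^2"

end

theory Submission
  imports Defs
begin

text \<open>The optimality conditions of the two proximal steps express the residual as
  \<open>u(k+1) = \<nabla>f(x(k+1)) + \<rho>(k) \<nabla>c(x(k+1)) c(x(k+1)) + v\<^sub>h - v\<^sub>g\<close> with subgradients
  \<open>v\<^sub>h\<close> of \<open>h\<close> and \<open>v\<^sub>g\<close> of \<open>g\<close>, so the bounds by \<open>G\<close> give
  \<open>\<rho>(k) \<parallel>\<nabla>c c\<parallel> \<le> \<parallel>u(k+1)\<parallel> + 3G\<close>. Replacing \<open>\<rho>(k)\<close> by the minimum penalty,
  squaring with \<open>(a + b)\<^sup>2 \<le> 2a\<^sup>2 + 2b\<^sup>2\<close> and averaging gives the first estimate;
  the error bound \<open>\<delta>\<parallel>c\<parallel> \<le> \<parallel>\<nabla>c c\<parallel>\<close> turns it into the second.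
  Since \<open>prox\<close> is defined by Hilbert choice, one must first show that for convex
  functions it really picks a minimiser; existence follows from continuity and the
  at least linear growth of convex functions.\<close>

lemma convex_on_linear_lower_bound:
  fixes h :: "'a::euclidean_space \<Rightarrow> real"
  assumes hc: "convex_on UNIV h"
  obtains A where "\<And>y. 1 \<le> norm (y - z) \<Longrightarrow> h z - A * norm (y - z) \<le> h y"
proof -
  have hcont: "continuous_on UNIV h"
    by (rule convex_on_continuous[OF open_UNIV hc])
  obtain w0 where w0: "\<forall>w\<in>sphere z 1. h w0 \<le> h w"
    using continuous_attains_inf[OF compact_sphere _ continuous_on_subset[OF hcont]]
    by (metis sphere_eq_empty zero_less_one not_less_iff_gr_or_eq subset_UNIV)
  define A where "A = \<bar>h w0 - h z\<bar>"
  have "h z - A * norm (y - z) \<le> h y" if t1: "1 \<le> norm (y - z)" for y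
  proof -
    define t where "t = norm (y - z)"
    have tpos: "t > 0" using t1 t_def by auto
    define w where "w = (1 - 1/t) *\<^sub>R z + (1/t) *\<^sub>R y"
    \<comment> \<open>\<open>w\<close> is the point where the segment from \<open>z\<close> to \<open>y\<close> crosses the unit sphere.\<close>
    have "w - z = (1/t) *\<^sub>R (y - z)" unfolding w_def by (simp add: algebra_simps)
    then have "w \<in> sphere z 1" using tpos t_def by (simp add: dist_norm norm_minus_commute)
    then have "h w0 \<le> h w" using w0 by blast
    also have "h w \<le> (1 - 1/t) * h z + (1/t) * h y"
      unfolding w_def using t1 t_def by (intro convex_onD[OF hc]) (auto simp: divide_le_eq)
    finally have "t * h w0 \<le> (t - 1) * h z + h y"
      using tpos by (simp add: field_simps)
    moreover have "t * (- A) \<le> t * (h w0 - h z)"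
      using tpos by (intro mult_left_mono) (auto simp: A_def)
    ultimately show ?thesis unfolding t_def by (simp add: algebra_simps)
  qed
  then show ?thesis using that[of A] by (simp add: A_def)
qed

lemma prox_minimizer_exists:
  fixes h :: "'a::euclidean_space \<Rightarrow> real"
  assumes hc: "convex_on UNIV h" and mu: "mu > 0"
  shows "\<exists>x. \<forall>y. h x + norm (x - z)^2 / (2 * mu) \<le> h y + norm (y - z)^2 / (2 * mu)"
proof -
  define \<phi> where "\<phi> y = h y + norm (y - z)^2 / (2 * mu)" for y
  have hcont: "continuous_on UNIV h"
    by (rule convex_on_continuous[OF open_UNIV hc])
  have \<phi>cont: "continuous_on A \<phi>" for A
    unfolding \<phi>_def using mu by (intro continuous_intros continuous_on_subset[OF hcont]) auto
  obtain A where A: "\<And>y. 1 \<le> norm (y - z) \<Longrightarrow> h z - A * norm (y - z) \<le> h y"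
    using convex_on_linear_lower_bound[OF hc] by blast
  define R where "R = max 1 (2 * mu * A) + 1"
  obtain x0 where x0: "\<forall>y\<in>cball z R. \<phi> x0 \<le> \<phi> y"
    using continuous_attains_inf[OF compact_cball _ \<phi>cont] R_def
    by (metis cball_eq_empty not_less max.cobounded1 add_nonneg_nonneg order.trans zero_le_one)
  have "\<phi> x0 \<le> \<phi> y" for y
  proof (cases "y \<in> cball z R")
    case False
    \<comment> \<open>Outside the ball the quadratic term beats the linear lower bound of \<open>h\<close>.\<close>
    define t where "t = norm (y - z)"
    have "t > R" using False t_def by (simp add: dist_norm norm_minus_commute)
    then have t1: "t \<ge> 1" and tA: "2 * mu * A < t" using R_def by auto
    have "t * A < t^2 / (2 * mu)"
      using mult_strict_left_mono[OF tA, of t] t1 mu by (simp add: field_simps power2_eq_square)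
    moreover have "h z - t * A + t^2 / (2 * mu) \<le> \<phi> y"
      using A[of y] t1 unfolding t_def \<phi>_def by (simp add: mult.commute)
    moreover have "\<phi> x0 \<le> \<phi> z" using x0 R_def by auto
    ultimately show ?thesis by (simp add: \<phi>_def)
  qed (use x0 in blast)
  then show ?thesis unfolding \<phi>_def by blast
qed

lemma prox_minimizes:
  fixes h :: "'a::euclidean_space \<Rightarrow> real"
  assumes "convex_on UNIV h" and "mu > 0"
  shows "h (prox mu h z) + norm (prox mu h z - z)^2 / (2 * mu) \<le> h y + norm (y - z)^2 / (2 * mu)"
  using someI_ex[OF prox_minimizer_exists[OF assms]] unfolding prox_def by blast

lemma le_of_le_add_mult_small:
  fixes a b c :: real
  assumes "\<And>t. 0 < t \<Longrightarrow> t \<le> 1 \<Longrightarrow> a \<le> b + t * c"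
  shows "a \<le> b"
proof (rule field_le_epsilon)
  fix e :: real assume e: "0 < e"
  define t where "t = min 1 (e / (\<bar>c\<bar> + 1))"
  have t: "0 < t" "t \<le> 1" using e by (auto simp: t_def)
  have "t * c \<le> t * \<bar>c\<bar>" using t by (simp add: mult_left_mono)
  also have "\<dots> \<le> e / (\<bar>c\<bar> + 1) * \<bar>c\<bar>" by (intro mult_right_mono) (auto simp: t_def)
  also have "\<dots> \<le> e" using e by (simp add: field_simps)
  finally show "a \<le> b + e" using assms[OF t] by linarith
qed

lemma prox_in_subdiff:
  fixes h :: "'a::euclidean_space \<Rightarrow> real"
  assumes hc: "convex_on UNIV h" and mu: "mu > 0"
  shows "(1 / mu) *\<^sub>R (z - prox mu h z) \<in> subdiff h (prox mu h z)"
proof -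
  define x where "x = prox mu h z"
  have "h x + inner ((1 / mu) *\<^sub>R (z - x)) (y - x) \<le> h y" for y
  proof -
    have "h x - h y \<le> inner (x - z) (y - x) / mu + t * (norm (y - x)^2 / (2 * mu))"
      if t: "0 < t" "t \<le> 1" for t
    proof -
      define yt where "yt = x + t *\<^sub>R (y - x)"
      have "h yt \<le> (1 - t) * h x + t * h y"
        using t convex_onD[OF hc, of t x y] by (simp add: yt_def algebra_simps)
      moreover have "norm (yt - z)^2 = norm (x - z)^2 + 2 * t * inner (x - z) (y - x) + t^2 * norm (y - x)^2"
        unfolding yt_def power2_norm_eq_inner
        by (simp add: algebra_simps inner_commute power2_eq_square)
      then have "norm (yt - z)^2 / (2 * mu) - norm (x - z)^2 / (2 * mu)
          = t * (inner (x - z) (y - x) / mu + t * (norm (y - x)^2 / (2 * mu)))"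
        using mu by (simp add: field_simps power2_eq_square)
      moreover have "h x + norm (x - z)^2 / (2 * mu) \<le> h yt + norm (yt - z)^2 / (2 * mu)"
        using prox_minimizes[OF hc mu] unfolding x_def .
      ultimately have "t * (h x - h y) \<le> t * (inner (x - z) (y - x) / mu + t * (norm (y - x)^2 / (2 * mu)))"
        by (simp add: algebra_simps)
      then show ?thesis using t by simp
    qed
    then have "h x - h y \<le> inner (x - z) (y - x) / mu"
      by (rule le_of_le_add_mult_small)
    then show ?thesis by (simp add: inner_diff_left diff_divide_distrib)
  qed
  then show ?thesis unfolding subdiff_def x_def by auto
qed

lemma grad_Qpen:
  fixes f :: "'a::euclidean_space \<Rightarrow> real" and c :: "'a \<Rightarrow> 'b::euclidean_space"
  assumes "f differentiable (at x)" and "c differentiable (at x)"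
  shows "grad (Qpen f c rho) x = grad f x + rho *\<^sub>R jacT c x (c x)"
proof -
  define Df where "Df = frechet_derivative f (at x)"
  define Dc where "Dc = frechet_derivative c (at x)"
  have df: "(f has_derivative Df) (at x)" and dc: "(c has_derivative Dc) (at x)"
    using assms frechet_derivative_works unfolding Df_def Dc_def by blast+
  define DQ where "DQ v = Df v + rho / 2 * (inner (c x) (Dc v) + inner (Dc v) (c x))" for v
  have "Qpen f c rho = (\<lambda>y. f y + rho / 2 * inner (c y) (c y))"
    unfolding Qpen_def by (simp add: power2_norm_eq_inner)
  then have dQ: "(Qpen f c rho has_derivative DQ) (at x)"
    unfolding DQ_def by (auto intro!: derivative_eq_intros df dc)
  have "v \<bullet> grad (Qpen f c rho) x = v \<bullet> (grad f x + rho *\<^sub>R jacT c x (c x))" for v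
  proof -
    have "v \<bullet> grad (Qpen f c rho) x = DQ v"
      using dQ frechet_derivative_at[OF dQ] adjoint_works[OF has_derivative_linear[OF dQ]]
      by (simp add: grad_def jacT_def)
    also have "\<dots> = Df v + rho * inner (Dc v) (c x)"
      by (simp add: DQ_def inner_commute)
    also have "\<dots> = v \<bullet> (grad f x + rho *\<^sub>R jacT c x (c x))"
      unfolding grad_def jacT_def Df_def[symmetric] Dc_def[symmetric] inner_add_right inner_scaleR_right
        adjoint_works[OF has_derivative_linear[OF df]] adjoint_works[OF has_derivative_linear[OF dc]]
      by simp
    finally show ?thesis .
  qed
  then show ?thesis using vector_eq_ldot by blast
qed

lemma prox_step_residual_in_subdiff:
  fixes h g :: "'a::euclidean_space \<Rightarrow> real"
  assumes hc: "convex_on UNIV h" and gc: "convex_on UNIV g" and mu: "mu > 0"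
  obtains vh vg where "vh \<in> subdiff h (prox mu h (z - mu *\<^sub>R v))" "vg \<in> subdiff g (prox mu g z)"
    "(1 / mu) *\<^sub>R (prox mu g z - prox mu h (z - mu *\<^sub>R v)) - v = vh - vg"
proof
  let ?xh = "prox mu h (z - mu *\<^sub>R v)" and ?xg = "prox mu g z"
  show "(1 / mu) *\<^sub>R (z - mu *\<^sub>R v - ?xh) \<in> subdiff h ?xh" by (rule prox_in_subdiff[OF hc mu])
  show "(1 / mu) *\<^sub>R (z - ?xg) \<in> subdiff g ?xg" by (rule prox_in_subdiff[OF gc mu])
  show "(1 / mu) *\<^sub>R (?xg - ?xh) - v = (1 / mu) *\<^sub>R (z - mu *\<^sub>R v - ?xh) - (1 / mu) *\<^sub>R (z - ?xg)"
    using mu by (simp add: algebra_simps)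
qed

lemma prox_step_penalty_jac_bound:
  fixes f h g :: "'a::euclidean_space \<Rightarrow> real" and c :: "'a \<Rightarrow> 'b::euclidean_space"
    and z v :: 'a and mu rho G :: real
  defines "x' \<equiv> prox mu h (z - mu *\<^sub>R v)"
  assumes hc: "convex_on UNIV h" and gc: "convex_on UNIV g" and mu: "mu > 0" and rho: "rho \<ge> 0"
    and "f differentiable (at x')" "c differentiable (at x')"
    and gradf: "norm (grad f x') \<le> G"
    and subh: "\<forall>y. \<forall>w \<in> subdiff h y. norm w \<le> G"
    and subg: "\<forall>y. \<forall>w \<in> subdiff g y. norm w \<le> G"
  shows "rho * norm (jacT c x' (c x'))
    \<le> norm (grad (Qpen f c rho) x' - v + (1 / mu) *\<^sub>R (prox mu g z - x')) + 3 * G"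
proof -
  obtain vh vg where vh: "vh \<in> subdiff h x'" and vg: "vg \<in> subdiff g (prox mu g z)"
    and res: "(1 / mu) *\<^sub>R (prox mu g z - x') - v = vh - vg"
    using prox_step_residual_in_subdiff[OF hc gc mu] unfolding x'_def by blast
  define u where "u = grad (Qpen f c rho) x' - v + (1 / mu) *\<^sub>R (prox mu g z - x')"
  have "rho *\<^sub>R jacT c x' (c x') = u - grad f x' - vh + vg"
    using res unfolding u_def grad_Qpen[OF assms(6,7)] by (simp add: algebra_simps)
  then have "rho * norm (jacT c x' (c x')) = norm (u - grad f x' - vh + vg)"
    using rho by (metis abs_of_nonneg norm_scaleR)
  also have "\<dots> \<le> norm u + norm (grad f x') + norm vh + norm vg"
    by (smt (verit) norm_triangle_ineq norm_triangle_ineq4)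
  also have "\<dots> \<le> norm u + 3 * G"
    using gradf subh vh subg vg by fastforce
  finally show ?thesis unfolding u_def .
qed

lemma mean_square_le_of_linear_bound:
  fixes a b :: "nat \<Rightarrow> real"
  assumes r: "r > 0" and K: "K > 0"
    and a_nonneg: "\<And>k. 0 \<le> a k" and bound: "\<And>k. k < K \<Longrightarrow> r * a k \<le> b k + M"
  shows "(1 / real K) * (\<Sum>k<K. (a k)^2) \<le> 2 / (r^2 * real K) * (\<Sum>k<K. (b k)^2) + 2 * M^2 / r^2"
proof -
  have "r^2 * (a k)^2 \<le> 2 * (b k)^2 + 2 * M^2" if "k < K" for k
  proof -
    have "(r * a k)^2 \<le> (b k + M)^2"
      using bound[OF that] r a_nonneg by (intro power_mono) auto
    also have "\<dots> \<le> 2 * (b k)^2 + 2 * M^2"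
      using zero_le_power2[of "b k - M"] by (simp add: power2_eq_square algebra_simps)
    finally show ?thesis by (simp add: power_mult_distrib)
  qed
  then have "(\<Sum>k<K. r^2 * (a k)^2) \<le> (\<Sum>k<K. 2 * (b k)^2 + 2 * M^2)"
    by (intro sum_mono) auto
  then have "r^2 * (\<Sum>k<K. (a k)^2) \<le> 2 * (\<Sum>k<K. (b k)^2) + real K * (2 * M^2)"
    by (simp add: sum.distrib sum_distrib_left)
  then have "(r^2 * (\<Sum>k<K. (a k)^2)) / (r^2 * real K) \<le> (2 * (\<Sum>k<K. (b k)^2) + real K * (2 * M^2)) / (r^2 * real K)"
    using r K by (intro divide_right_mono) auto
  then show ?thesis
    using r K by (simp add: add_divide_distrib)
qed

lemma mean_square_bounds_min_weighted:
  fixes a b e rho :: "nat \<Rightarrow> real" and K :: nat and M \<delta> :: real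
  defines "r \<equiv> Min (rho ` {..<K})"
  assumes K: "K \<ge> 1" and rho: "\<And>k. rho k > 0" and a: "\<And>k. 0 \<le> a k"
    and bound: "\<And>k. rho k * a k \<le> b k + M"
  shows "(1 / real K) * (\<Sum>k<K. (a k)^2) \<le> 2 / (r^2 * real K) * (\<Sum>k<K. (b k)^2) + 2 * M^2 / r^2"
    and "\<delta> > 0 \<Longrightarrow> (\<And>k. 0 \<le> e k) \<Longrightarrow> (\<And>k. \<delta> * e k \<le> a k) \<Longrightarrow>
      (1 / real K) * (\<Sum>k<K. (e k)^2) \<le> 2 / (r^2 * \<delta>^2 * real K) * (\<Sum>k<K. (b k)^2) + 2 * M^2 / (\<delta>^2 * r^2)"
proof -
  have K0: "K > 0" using K by simp
  have "r \<in> rho ` {..<K}" unfolding r_def using K by (intro Min_in) (auto simp: lessThan_empty_iff)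
  then have r: "r > 0" using rho by auto
  have r_bound: "r * a k \<le> b k + M" if "k < K" for k
  proof -
    have "r \<le> rho k" unfolding r_def using that by simp
    then show ?thesis using mult_right_mono[OF _ a[of k]] bound[of k] by fastforce
  qed
  show "(1 / real K) * (\<Sum>k<K. (a k)^2) \<le> 2 / (r^2 * real K) * (\<Sum>k<K. (b k)^2) + 2 * M^2 / r^2"
    by (rule mean_square_le_of_linear_bound[OF r K0 a r_bound])
  assume \<delta>: "\<delta> > 0" and e: "\<And>k. 0 \<le> e k" and error_bound: "\<And>k. \<delta> * e k \<le> a k"
  have "r * \<delta> * e k \<le> b k + M" if "k < K" for k
    using r_bound[OF that] mult_left_mono[OF error_bound[of k] less_imp_le[OF r]] by (simp add: mult.assoc)
  from mean_square_le_of_linear_bound[OF _ K0 e this]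
  show "(1 / real K) * (\<Sum>k<K. (e k)^2) \<le> 2 / (r^2 * \<delta>^2 * real K) * (\<Sum>k<K. (b k)^2) + 2 * M^2 / (\<delta>^2 * r^2)"
    using r \<delta> by (simp add: power_mult_distrib mult_ac)
qed

theorem lemmaC4:
  fixes f h g :: "'a::euclidean_space \<Rightarrow> real"
    and c :: "'a \<Rightarrow> 'b::euclidean_space"
    and x z Gk u :: "nat \<Rightarrow> 'a"
    and mu rho :: "nat \<Rightarrow> real"
    and Lf Lc C G beta :: real
  assumes hconv: "convex_on UNIV h" and gconv: "convex_on UNIV g"
    and fsmooth: "smooth_fun Lf f" and csmooth: "smooth_map Lc c"
    and Cpos: "C > 0" and Gpos: "G > 0"
    and gradf_bd: "\<forall>y. norm (grad f y) \<le> G"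
    and subh_bd: "\<forall>y. \<forall>v \<in> subdiff h y. norm v \<le> G"
    and subg_bd: "\<forall>y. \<forall>v \<in> subdiff g y. norm v \<le> G"
    and jac_bd: "\<forall>y. onorm (jacT c y) \<le> G"
    and c_bd: "\<forall>y. norm (c y) \<le> C"
    and mu_pos: "\<forall>k. mu k > 0" and rho_pos: "\<forall>k. rho k > 0"
    and step: "\<forall>k. mu k * (rho k * (Lf / rho 0 + G^2 + C * Lc)) \<le> 1/4"
    and mu_mono: "\<forall>k. mu (Suc k) \<le> mu k"
    and rho_mono: "\<forall>k. rho k \<le> rho (Suc k)"
    and beta: "0 < beta" "beta \<le> 1"
    and xupd: "\<forall>k. x (Suc k) = prox (mu k) h (z k - mu k *\<^sub>R Gk k)"
    and zupd: "\<forall>k. z (Suc k) = z k - beta *\<^sub>R (prox (mu k) g (z k) - x (Suc k))"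
    and udef: "\<forall>k. u (Suc k) = grad (Qpen f c (rho k)) (x (Suc k)) - Gk k
                  + (1 / mu k) *\<^sub>R (prox (mu k) g (z k) - x (Suc k))"
  shows "\<forall>K::nat. K \<ge> 1 \<longrightarrow>
     (let rmin = Min (rho ` {..<K}) in
       (1 / real K) * (\<Sum>k<K. (norm (jacT c (x (Suc k)) (c (x (Suc k)))))^2)
         \<le> 2 / (rmin^2 * real K) * (\<Sum>k<K. (norm (u (Suc k)))^2) + 18 * G^2 / rmin^2
     \<and> (\<forall>\<delta>::real. \<delta> > 0 \<longrightarrow>
          (\<forall>k. norm (jacT c (x k) (c (x k))) \<ge> \<delta> * norm (c (x k))) \<longrightarrow>
          (1 / real K) * (\<Sum>k<K. (norm (c (x (Suc k))))^2)
            \<le> 2 / (rmin^2 * \<delta>^2 * real K) * (\<Sum>k<K. (norm (u (Suc k)))^2)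
              + 18 * G^2 / (\<delta>^2 * rmin^2)))"
proof -
  have diff: "f differentiable (at y)" "c differentiable (at y)" for y
    using fsmooth csmooth unfolding smooth_fun_def smooth_map_def by blast+
  have jac_step: "rho k * norm (jacT c (x (Suc k)) (c (x (Suc k)))) \<le> norm (u (Suc k)) + 3 * G" for k
    using prox_step_penalty_jac_bound[OF hconv gconv _ _ diff,
        where mu="mu k" and rho="rho k" and z="z k" and v="Gk k"]
      mu_pos rho_pos gradf_bd subh_bd subg_bd xupd udef
    by (simp add: less_imp_le)
  note bounds = mean_square_bounds_min_weighted[OF _ rho_pos[rule_format] norm_ge_zero jac_step]
  show ?thesis
    unfolding Let_def
    using bounds(1) bounds(2)[where e="\<lambda>k. norm (c (x (Suc k)))"]
    by (simp add: power_mult_distrib)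
qed

end
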